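(* Let $X=\mathbb{R}/\mathbb{Z}$ with its standard metric, $\mu_1=\mu_2$ Lebesgue measure, $(X,T_1,\mu_1)$ exponentially mixing for $BV$ against $L^\infty$, and $T_2(x)=x+\alpha\bmod 1$. Suppose there are a constant $c(\alpha)>0$ and a function $\varphi:\mathbb{N}\to(0,\infty)$ with $\varphi(q)\to\infty$ such that \[ |q\alpha-p|\ge c(\alpha)\,\frac{(\log q)\,\varphi(q)}{q^2} \] for all $p\in\mathbb{Z}$ and all sufficiently large $q\in\mathbb{N}$. Let $(r_n)_n$ be a sequence of positive numbers with $r_n\ge\frac{(\log n)h(n)}{n^2}$ for some function $h$ with $h(n)\to\infty$ and $h(n)/\varphi(n)\to0$ as $n\to\infty$. Then $(\mu_1\times\mu_2)(\limsup_n E_{n,r_n}^{T_1,T_2})=1$.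
   Context: $(X,T,\mu)$ is exponentially mixing for $BV$ against $L^\infty$ if there are $C,\theta>0$ such that for all $\psi$ of bounded variation, all $\varphi\in L^\infty(\mu)$ and all $n\ge0$, $\bigl|\int\psi\cdot\varphi\circ T^n\,d\mu-\int\psi\,d\mu\int\varphi\,d\mu\bigr|\le C\|\psi\|_{BV}\|\varphi\|_{L^\infty}e^{-\theta n}$. For $n\in\mathbb{N}$ and $r>0$, $E_{n,r}^{T_1,T_2}:=\{(x,y)\in X\times X : d(T_1^i x, T_2^j y)<r \text{ for some } 0\le i,j<n\}$; $E_{n,r_n}^{T_1,T_2}$ denotes this set with $r=r_n$. *)

theory Defs
  imports "HOL-Analysis.Analysis" "HOL-Probability.Essential_Supremum"
begin

text \<open>The circle X = R/Z is represented by the fundamental domain [0,1), with the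
  quotient (arc-length) metric and Lebesgue measure.\<close>

definition circ_dist :: "real \<Rightarrow> real \<Rightarrow> real" where
  "circ_dist x y = \<bar>x - y - of_int (round (x - y))\<bar>"

definition circle_measure :: "real measure" where
  "circle_measure = restrict_space lborel {0..<1}"

definition rot :: "real \<Rightarrow> real \<Rightarrow> real" where
  "rot \<alpha> x = frac (x + \<alpha>)"

definition measure_preserving_map :: "'a measure \<Rightarrow> ('a \<Rightarrow> 'a) \<Rightarrow> bool" where
  "measure_preserving_map M T \<longleftrightarrow> T \<in> measurable M M \<and> distr M M T = M"

definition total_var :: "(real \<Rightarrow> real) \<Rightarrow> ereal" where
  "total_var f = (SUP ts \<in> {ts. sorted_wrt (<) ts \<and> set ts \<subseteq> {0..<1}}.
      ereal (\<Sum>i < length ts - 1. \<bar>f (ts ! (i + 1)) - f (ts ! i)\<bar>))"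

definition bv_norm :: "(real \<Rightarrow> real) \<Rightarrow> real" where
  "bv_norm f = (SUP x \<in> {0..<1}. \<bar>f x\<bar>) + real_of_ereal (total_var f)"

definition linf_norm :: "'a measure \<Rightarrow> ('a \<Rightarrow> real) \<Rightarrow> real" where
  "linf_norm M f = real_of_ereal (esssup M (\<lambda>x. ereal \<bar>f x\<bar>))"

definition exp_mixing_BV_Linf :: "(real \<Rightarrow> real) \<Rightarrow> bool" where
  "exp_mixing_BV_Linf T \<longleftrightarrow> (\<exists>C \<theta>. C > 0 \<and> \<theta> > 0 \<and>
     (\<forall>\<psi> \<phi> (n::nat). total_var \<psi> < \<infinity> \<and> \<phi> \<in> borel_measurable circle_measure \<and>
        esssup circle_measure (\<lambda>x. ereal \<bar>\<phi> x\<bar>) < \<infinity> \<longrightarrow>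
        \<bar>(\<integral>x. \<psi> x * \<phi> ((T ^^ n) x) \<partial>circle_measure)
          - (\<integral>x. \<psi> x \<partial>circle_measure) * (\<integral>x. \<phi> x \<partial>circle_measure)\<bar>
        \<le> C * bv_norm \<psi> * linf_norm circle_measure \<phi> * exp (- \<theta> * real n)))"

definition E_set :: "(real \<Rightarrow> real) \<Rightarrow> (real \<Rightarrow> real) \<Rightarrow> nat \<Rightarrow> real \<Rightarrow> (real \<times> real) set" where
  "E_set T1 T2 n r = {(x, y). x \<in> {0..<1} \<and> y \<in> {0..<1} \<and>
      (\<exists>i<n. \<exists>j<n. circ_dist ((T1 ^^ i) x) ((T2 ^^ j) y) < r)}"

end

theory Submission
  imports Defs "HOL-Probability.Probability"
begin

text \<open>Fix \<open>y\<close> and put \<open>\<rho> = G ln n / n\<^sup>2\<close>. The Diophantine condition (together with the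
  irrationality of \<open>\<alpha>\<close> it implies) makes the orbit points \<open>y + j\<alpha>\<close>, \<open>j < n\<close>, \<open>2\<rho>\<close>-separated,
  so the points \<open>x\<close> whose \<open>T\<^sub>1\<close>-orbit up to time \<open>n\<close> avoids all \<open>\<rho>\<close>-balls about them are
  those where \<open>F = 1 - \<Sum>\<^sub>j 1\<^bsub>B(y + j\<alpha>, \<rho>)\<^esub>\<close> equals \<open>1\<close> along the orbit. \<open>F\<close> has
  integral \<open>1 - 2n\<rho>\<close> and variation \<open>O(n)\<close>; looking only at times spaced
  \<open>g \<approx> 3 ln n / \<theta>\<close> apart, exponential mixing makes these \<open>m \<approx> n / g\<close> events almost
  independent, so the section has measure at most \<open>(1 - 2n\<rho>)\<^sup>m + O(1/n) \<le> exp (-2G / (3/\<theta> + 2)) + O(1/n)\<close>.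
  Since \<open>h \<rightarrow> \<infinity>\<close>, \<open>G\<close> can be taken arbitrarily large, hence \<open>\<mu>(E\<^sub>n\<^sub>,\<^sub>r\<^sub>n) \<rightarrow> 1\<close> and the
  limsup set has full measure.\<close>

section \<open>The circle and the rotation\<close>

definition dist_int :: "real \<Rightarrow> real" where
  "dist_int t = \<bar>t - of_int (round t)\<bar>"

lemma circ_dist_eq_dist_int: "circ_dist x y = dist_int (x - y)"
  by (simp add: circ_dist_def dist_int_def)

lemma dist_int_le: "dist_int t \<le> \<bar>t - of_int k\<bar>"
  unfolding dist_int_def by (rule round_diff_minimal)

lemma dist_int_le_half: "dist_int t \<le> 1/2"
  using of_int_round_abs_le[of t] by (simp add: dist_int_def abs_minus_commute)

lemma dist_int_add_of_int: "dist_int (t + of_int k) = dist_int t"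
proof (rule antisym)
  show "dist_int (t + of_int k) \<le> dist_int t"
    using dist_int_le[of "t + of_int k" "round t + k"] by (simp add: dist_int_def)
  show "dist_int t \<le> dist_int (t + of_int k)"
    using dist_int_le[of t "round (t + of_int k) - k"] by (simp add: dist_int_def)
qed

lemma dist_int_uminus: "dist_int (- t) = dist_int t"
proof (rule antisym)
  show "dist_int (- t) \<le> dist_int t"
    using dist_int_le[of "-t" "- round t"] by (simp add: dist_int_def abs_minus_commute)
  show "dist_int t \<le> dist_int (- t)"
    using dist_int_le[of t "- round (-t)"] by (simp add: dist_int_def abs_minus_commute)
qed

lemma dist_int_add_le: "dist_int (a + b) \<le> dist_int a + dist_int b"
proof -
  have "dist_int (a + b) \<le> \<bar>a + b - of_int (round a + round b)\<bar>" by (rule dist_int_le)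
  also have "\<dots> \<le> dist_int a + dist_int b" by (simp add: dist_int_def)
  finally show ?thesis .
qed

lemma circ_dist_commute: "circ_dist x y = circ_dist y x"
  using dist_int_uminus[of "x - y"] by (simp add: circ_dist_eq_dist_int)

lemma circ_dist_triangle: "circ_dist x y \<le> circ_dist x z + circ_dist z y"
  using dist_int_add_le[of "x - z" "z - y"] by (simp add: circ_dist_eq_dist_int)

lemma funpow_rot_eq_add_int: "\<exists>k::int. (rot \<alpha> ^^ j) y = y + real j * \<alpha> + of_int k"
proof (induction j)
  case 0
  show ?case by (intro exI[of _ 0]) simp
next
  case (Suc j)
  then obtain k where k: "(rot \<alpha> ^^ j) y = y + real j * \<alpha> + of_int k" by blast
  have "(rot \<alpha> ^^ Suc j) y = frac (y + real j * \<alpha> + of_int k + \<alpha>)"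
    by (simp only: funpow.simps(2) o_apply k rot_def)
  then show ?case
    by (intro exI[of _ "k - \<lfloor>y + real j * \<alpha> + of_int k + \<alpha>\<rfloor>"]) (simp add: frac_def algebra_simps)
qed

lemma circ_dist_funpow_rot:
  "circ_dist ((rot \<alpha> ^^ j) y) ((rot \<alpha> ^^ j') y) = dist_int ((real j - real j') * \<alpha>)"
proof -
  obtain k k' where "(rot \<alpha> ^^ j) y = y + real j * \<alpha> + of_int k"
    and "(rot \<alpha> ^^ j') y = y + real j' * \<alpha> + of_int k'"
    using funpow_rot_eq_add_int by metis
  then have "(rot \<alpha> ^^ j) y - (rot \<alpha> ^^ j') y = (real j - real j') * \<alpha> + of_int (k - k')"
    by (simp add: algebra_simps)
  then show ?thesis
    using dist_int_add_of_int[of "(real j - real j') * \<alpha>" "k - k'"] by (simp add: circ_dist_eq_dist_int)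
qed

lemma prob_space_circle_measure: "prob_space circle_measure"
  by (rule prob_spaceI) (simp add: circle_measure_def emeasure_restrict_space space_restrict_space)

lemma space_circle_measure: "space circle_measure = {0..<1}"
  by (simp add: circle_measure_def space_restrict_space)

lemma space_pair_circle_measure:
  "space (circle_measure \<Otimes>\<^sub>M circle_measure) = {0..<1} \<times> {0..<1}"
  by (simp add: space_pair_measure space_circle_measure)

lemma borel_measurable_circle_measure:
  "f \<in> borel_measurable borel \<Longrightarrow> f \<in> borel_measurable circle_measure"
  unfolding circle_measure_def by (simp add: measurable_restrict_space1)

lemma measurable_circle_measure_imp_borel:
  assumes "f \<in> measurable N circle_measure"
  shows "f \<in> borel_measurable N"
proof -
  have "(\<lambda>x. x) \<in> borel_measurable circle_measure"
    by (rule borel_measurable_circle_measure) simp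
  then show ?thesis using assms measurable_compose by blast
qed

lemma borel_measurable_round [measurable]:
  "(\<lambda>x::real. real_of_int (round x)) \<in> borel_measurable borel"
  unfolding round_def by measurable

lemma borel_measurable_circ_dist [measurable]:
  "(\<lambda>(x, y). circ_dist x y) \<in> borel_measurable (borel \<Otimes>\<^sub>M borel)"
  unfolding circ_dist_def by measurable

lemma rot_measurable: "rot \<alpha> \<in> measurable circle_measure circle_measure"
  unfolding circle_measure_def
proof (rule measurable_restrict_space3)
  have "(\<lambda>x. frac (x + \<alpha>)) \<in> borel_measurable borel"
    unfolding frac_def by measurable
  then show "rot \<alpha> \<in> measurable lborel lborel"
    unfolding rot_def[abs_def] by (simp only: measurable_lborel1 measurable_lborel2)
  show "rot \<alpha> \<in> {0..<1} \<rightarrow> {0..<1}" by (simp add: rot_def frac_lt_1 Pi_iff)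
qed

lemma funpow_in_unit_interval:
  "T \<in> measurable circle_measure circle_measure \<Longrightarrow> x \<in> {0..<1} \<Longrightarrow> (T ^^ n) x \<in> {0..<1}"
  using measurable_space[OF measurable_compose_n, of T circle_measure x n]
  by (simp add: space_circle_measure)

section \<open>Total variation\<close>

lemma total_var_nonneg: "total_var f \<ge> 0"
proof -
  have "ereal (\<Sum>i < length ([]::real list) - 1. \<bar>f ([] ! (i + 1)) - f ([] ! i)\<bar>) \<le> total_var f"
    unfolding total_var_def by (rule SUP_upper) auto
  then show ?thesis by (simp add: zero_ereal_def)
qed

lemma total_var_add: "total_var (\<lambda>x. f x + g x) \<le> total_var f + total_var g"
  unfolding total_var_def
proof (rule SUP_least)
  let ?P = "{ts. sorted_wrt (<) ts \<and> set ts \<subseteq> {0..<1}}"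
  let ?V = "\<lambda>f ts. \<Sum>i < length ts - 1. \<bar>f (ts ! (i + 1)) - f (ts ! i)\<bar>"
  fix ts :: "real list" assume ts: "ts \<in> ?P"
  have "?V (\<lambda>x. f x + g x) ts \<le> ?V f ts + ?V g ts"
    unfolding sum.distrib[symmetric] by (rule sum_mono) linarith
  then have "ereal (?V (\<lambda>x. f x + g x) ts) \<le> ereal (?V f ts) + ereal (?V g ts)"
    by simp
  also have "\<dots> \<le> (SUP ts \<in> ?P. ereal (?V f ts)) + (SUP ts \<in> ?P. ereal (?V g ts))"
    by (intro add_mono SUP_upper ts)
  finally show "ereal (?V (\<lambda>x. f x + g x) ts) \<le> \<dots>" .
qed

lemma total_var_uminus: "total_var (\<lambda>x. - f x) = total_var f"
proof -
  have "\<And>a b::real. \<bar>- a - - b\<bar> = \<bar>a - b\<bar>" by linarith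
  then show ?thesis unfolding total_var_def by simp
qed

lemma total_var_diff: "total_var (\<lambda>x. f x - g x) \<le> total_var f + total_var g"
  using total_var_add[of f "\<lambda>x. - g x"] total_var_uminus[of g] by simp

lemma total_var_const: "total_var (\<lambda>x. c) = 0"
proof (rule antisym)
  show "total_var (\<lambda>x. c) \<le> 0" unfolding total_var_def by (rule SUP_least) simp
qed (rule total_var_nonneg)

lemma total_var_sum:
  fixes f :: "nat \<Rightarrow> real \<Rightarrow> real"
  shows "total_var (\<lambda>x. \<Sum>j<n. f j x) \<le> (\<Sum>j<n. total_var (f j))"
proof (induction n)
  case 0
  show ?case by (simp add: total_var_const)
next
  case (Suc n)
  have "total_var (\<lambda>x. \<Sum>j<Suc n. f j x) \<le> total_var (\<lambda>x. \<Sum>j<n. f j x) + total_var (f n)"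
    using total_var_add[of "\<lambda>x. \<Sum>j<n. f j x" "f n"] by simp
  also have "\<dots> \<le> (\<Sum>j<n. total_var (f j)) + total_var (f n)" by (intro add_mono Suc order.refl)
  finally show ?case by simp
qed

lemma total_var_mono_le_1:
  assumes "mono f" "\<And>x. 0 \<le> f x" "\<And>x. f x \<le> 1"
  shows "total_var f \<le> 1"
  unfolding total_var_def
proof (rule SUP_least)
  fix ts :: "real list" assume ts: "ts \<in> {ts. sorted_wrt (<) ts \<and> set ts \<subseteq> {0..<1}}"
  define L where "L = length ts - 1"
  have "(\<Sum>i < L. \<bar>f (ts ! (i + 1)) - f (ts ! i)\<bar>) = (\<Sum>i < L. f (ts ! Suc i) - f (ts ! i))"
  proof (rule sum.cong[OF refl])
    fix i assume "i \<in> {..<L}"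
    then have "ts ! i < ts ! (i + 1)"
      using ts sorted_wrt_nth_less[of "(<)" ts i "i + 1"] unfolding L_def by auto
    then show "\<bar>f (ts ! (i + 1)) - f (ts ! i)\<bar> = f (ts ! Suc i) - f (ts ! i)"
      using monoD[OF assms(1), of "ts ! i" "ts ! (i + 1)"] by simp
  qed
  also have "\<dots> = f (ts ! L) - f (ts ! 0)" by (rule sum_lessThan_telescope)
  also have "\<dots> \<le> 1" using assms(2)[of "ts ! 0"] assms(3)[of "ts ! L"] by simp
  finally show "ereal (\<Sum>i < length ts - 1. \<bar>f (ts ! (i + 1)) - f (ts ! i)\<bar>) \<le> 1"
    unfolding L_def by simp
qed

lemma total_var_indicator_interval: "total_var (indicator {a<..<b} :: real \<Rightarrow> real) \<le> 2"
proof (cases "a < b")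
  case True
  have "indicator {a<..<b} = (\<lambda>x::real. (if a < x then 1 else 0) - (if b \<le> x then 1 else 0 :: real))"
    using True by (auto simp: indicator_def)
  then have "total_var (indicator {a<..<b})
      \<le> total_var (\<lambda>x. if a < x then 1 else 0) + total_var (\<lambda>x. if b \<le> x then 1 else 0)"
    by (simp add: total_var_diff)
  also have "\<dots> \<le> 1 + 1"
    by (intro add_mono total_var_mono_le_1 monoI) auto
  finally show ?thesis by simp
next
  case False
  then have "indicator {a<..<b} = (\<lambda>x::real. 0 :: real)" by (auto simp: indicator_def)
  then show ?thesis by (simp add: total_var_const)
qed

lemma bv_norm_nonneg:
  assumes "\<And>x. x \<in> {0..<1} \<Longrightarrow> \<bar>f x\<bar> \<le> B"
  shows "0 \<le> bv_norm f"
proof -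
  have "bdd_above ((\<lambda>x. \<bar>f x\<bar>) ` {0..<1})" using assms by (intro bdd_aboveI[of _ B]) auto
  then have "\<bar>f 0\<bar> \<le> (SUP x\<in>{0..<1}. \<bar>f x\<bar>)" by (intro cSUP_upper) auto
  moreover have "0 \<le> real_of_ereal (total_var f)"
    using total_var_nonneg[of f] by (simp add: real_of_ereal_pos)
  ultimately show ?thesis unfolding bv_norm_def by linarith
qed

lemma bv_norm_le:
  assumes "\<And>x. x \<in> {0..<1} \<Longrightarrow> \<bar>f x\<bar> \<le> 1" and "total_var f \<le> ereal V"
  shows "bv_norm f \<le> 1 + V"
proof -
  have "(SUP x\<in>{0..<1}. \<bar>f x\<bar>) \<le> 1" by (rule cSUP_least) (use assms(1) in auto)
  moreover have "real_of_ereal (total_var f) \<le> V"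
    using total_var_nonneg[of f] assms(2) by (cases "total_var f") auto
  ultimately show ?thesis unfolding bv_norm_def by linarith
qed

section \<open>Arcs\<close>

lemma circ_dist_less_iff:
  assumes "z \<in> {0..<1}" "x \<in> {0..<1}" "\<rho> < 1/2"
  shows "circ_dist x z < \<rho> \<longleftrightarrow>
    (z-\<rho> < x \<and> x < z+\<rho>) \<or> (z-\<rho>+1 < x \<and> x < z+\<rho>+1) \<or> (z-\<rho>-1 < x \<and> x < z+\<rho>-1)"
proof
  assume close: "circ_dist x z < \<rho>"
  define k where "k = round (x - z)"
  have "\<bar>of_int k - (x - z)\<bar> \<le> 1/2" unfolding k_def by (rule of_int_round_abs_le)
  then have "of_int k - (x - z) \<le> 1/2" "x - z - of_int k \<le> 1/2" by linarith+
  then have "of_int k < (3/2::real)" "of_int k > (-3/2::real)" using assms by auto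
  then have "k = 0 \<or> k = 1 \<or> k = -1" by linarith
  moreover have "\<bar>x - z - of_int k\<bar> < \<rho>" using close by (simp add: circ_dist_def k_def)
  ultimately show "(z-\<rho> < x \<and> x < z+\<rho>) \<or> (z-\<rho>+1 < x \<and> x < z+\<rho>+1) \<or> (z-\<rho>-1 < x \<and> x < z+\<rho>-1)"
    by auto
next
  have le: "circ_dist x z \<le> \<bar>x - z - of_int k\<bar>" for k
    unfolding circ_dist_eq_dist_int by (rule dist_int_le)
  assume "(z-\<rho> < x \<and> x < z+\<rho>) \<or> (z-\<rho>+1 < x \<and> x < z+\<rho>+1) \<or> (z-\<rho>-1 < x \<and> x < z+\<rho>-1)"
  then show "circ_dist x z < \<rho>" using le[of 0] le[of 1] le[of "-1"] by auto
qed

text \<open>On the fundamental domain, the circle ball of radius \<open>\<rho> < 1/2\<close> about \<open>z\<close> is the trace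
  of the three intervals of radius \<open>\<rho>\<close> about the lifts \<open>z\<close>, \<open>z + 1\<close> and \<open>z - 1\<close>.\<close>

definition arc_indicator :: "real \<Rightarrow> real \<Rightarrow> real \<Rightarrow> real" where
  "arc_indicator z \<rho> x = indicator {z-\<rho><..<z+\<rho>} x + indicator {z-\<rho>+1<..<z+\<rho>+1} x
     + indicator {z-\<rho>-1<..<z+\<rho>-1} x"

lemma arc_indicator_eq:
  assumes "z \<in> {0..<1}" "x \<in> {0..<1}" "0 < \<rho>" "\<rho> < 1/2"
  shows "arc_indicator z \<rho> x = (if circ_dist x z < \<rho> then 1 else 0)"
  using assms unfolding circ_dist_less_iff[OF assms(1,2,4)] arc_indicator_def
  by (auto simp: indicator_def)

lemma borel_measurable_arc_indicator [measurable]: "arc_indicator z \<rho> \<in> borel_measurable borel"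
  unfolding arc_indicator_def[abs_def] by measurable

lemma total_var_arc_indicator: "total_var (arc_indicator z \<rho>) \<le> 6"
proof -
  let ?I = "\<lambda>a b. total_var (indicator {a<..<b} :: real \<Rightarrow> real)"
  have "total_var (arc_indicator z \<rho>)
      \<le> (?I (z-\<rho>) (z+\<rho>) + ?I (z-\<rho>+1) (z+\<rho>+1)) + ?I (z-\<rho>-1) (z+\<rho>-1)"
    unfolding arc_indicator_def[abs_def] by (intro order.trans[OF total_var_add] add_mono total_var_add order.refl)
  also have "\<dots> \<le> (2 + 2) + 2" by (intro add_mono total_var_indicator_interval)
  finally show ?thesis by simp
qed

lemma sets_circle_ball: "{x\<in>{0..<1}. circ_dist x z < \<rho>} \<in> sets circle_measure"
proof -
  have "(\<lambda>x. circ_dist x z) \<in> borel_measurable circle_measure"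
    by (rule borel_measurable_circle_measure) (unfold circ_dist_def, measurable)
  from borel_measurable_less[OF this borel_measurable_const]
  show ?thesis by (simp add: space_circle_measure)
qed

lemma measure_circle_ball:
  assumes z: "z \<in> {0..<1}" and \<rho>: "0 < \<rho>" "\<rho> < 1/2"
  shows "measure circle_measure {x\<in>{0..<1}. circ_dist x z < \<rho>} = 2 * \<rho>"
proof -
  let ?B = "{x\<in>{0..<1}. circ_dist x z < \<rho>}"
  have B: "?B = {x\<in>{0..<1}. (z-\<rho> < x \<and> x < z+\<rho>) \<or> (z-\<rho>+1 < x \<and> x < z+\<rho>+1) \<or> (z-\<rho>-1 < x \<and> x < z+\<rho>-1)}"
    using circ_dist_less_iff[OF z _ \<rho>(2)] by auto
  have "measure circle_measure ?B = measure lborel ?B"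
    unfolding circle_measure_def by (rule measure_restrict_space) auto
  also have "\<dots> = 2 * \<rho>"
  proof -
    consider "\<rho> \<le> z" "z + \<rho> \<le> 1" | "z < \<rho>" | "1 < z + \<rho>" by linarith
    then show ?thesis
    proof cases
      case 1
      then have "?B = {z-\<rho><..<z+\<rho>}" unfolding B using \<rho> by auto
      then show ?thesis using \<rho> by simp
    next
      case 2
      then have "?B = {0..<z+\<rho>} \<union> {z-\<rho>+1<..<1}" unfolding B using \<rho> z by auto
      moreover have "measure lborel ({0..<z+\<rho>} \<union> {z-\<rho>+1<..<1})
          = measure lborel {0..<z+\<rho>} + measure lborel {z-\<rho>+1<..<1}"
        by (rule measure_Union) (use \<rho> z 2 in auto)
      ultimately show ?thesis using \<rho> z 2 by simp
    next
      case 3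
      then have "?B = {0..<z+\<rho>-1} \<union> {z-\<rho><..<1}" unfolding B using \<rho> z by auto
      moreover have "measure lborel ({0..<z+\<rho>-1} \<union> {z-\<rho><..<1})
          = measure lborel {0..<z+\<rho>-1} + measure lborel {z-\<rho><..<1}"
        by (rule measure_Union) (use \<rho> z 3 in auto)
      ultimately show ?thesis using \<rho> z 3 by simp
    qed
  qed
  finally show ?thesis .
qed

lemma integral_arc_indicator:
  assumes z: "z \<in> {0..<1}" and \<rho>: "0 < \<rho>" "\<rho> < 1/2"
  shows "(\<integral>x. arc_indicator z \<rho> x \<partial>circle_measure) = 2 * \<rho>"
proof -
  let ?B = "{x\<in>{0..<1}. circ_dist x z < \<rho>}"
  have "(\<integral>x. arc_indicator z \<rho> x \<partial>circle_measure) = (\<integral>x. indicator ?B x \<partial>circle_measure)"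
    using arc_indicator_eq[OF z _ \<rho>] by (intro Bochner_Integration.integral_cong) (auto simp: space_circle_measure)
  also have "\<dots> = measure circle_measure ?B"
    using sets_circle_ball[of z \<rho>] by (simp add: Int_absorb2 sets.sets_into_space)
  finally show ?thesis using measure_circle_ball[OF assms] by simp
qed

definition uncovered :: "(nat \<Rightarrow> real) \<Rightarrow> nat \<Rightarrow> real \<Rightarrow> real \<Rightarrow> real" where
  "uncovered z n \<rho> x = 1 - (\<Sum>j<n. arc_indicator (z j) \<rho> x)"

lemma borel_measurable_uncovered [measurable]: "uncovered z n \<rho> \<in> borel_measurable borel"
  unfolding uncovered_def[abs_def] by measurable

lemma total_var_uncovered: "total_var (uncovered z n \<rho>) \<le> ereal (6 * real n)"
proof -
  have "total_var (uncovered z n \<rho>)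
      \<le> total_var (\<lambda>x. 1) + total_var (\<lambda>x. \<Sum>j<n. arc_indicator (z j) \<rho> x)"
    unfolding uncovered_def[abs_def] by (rule total_var_diff)
  also have "\<dots> \<le> 0 + (\<Sum>j<n. total_var (arc_indicator (z j) \<rho>))"
    unfolding total_var_const by (intro add_mono order.refl total_var_sum)
  also have "\<dots> \<le> 0 + (\<Sum>j<n. 6)" by (intro add_mono order.refl sum_mono total_var_arc_indicator)
  finally show ?thesis by (simp add: mult.commute)
qed

lemma sum_if_unique:
  assumes "\<And>j j'. j \<in> A \<Longrightarrow> j' \<in> A \<Longrightarrow> P j \<Longrightarrow> P j' \<Longrightarrow> j = j'" "finite A"
  shows "(\<Sum>j\<in>A. if P j then 1 else 0 :: real) = (if \<exists>j\<in>A. P j then 1 else 0)"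
proof (cases "\<exists>j\<in>A. P j")
  case True
  then obtain j0 where j0: "j0 \<in> A" "P j0" by blast
  have "(\<Sum>j\<in>A. if P j then 1 else 0 :: real) = (\<Sum>j\<in>A. if j = j0 then 1 else 0)"
    by (rule sum.cong[OF refl]) (use assms j0 in auto)
  then show ?thesis using j0 assms(2) True by simp
qed simp

section \<open>Mixing along sampled times\<close>

definition mixing_rate :: "(real \<Rightarrow> real) \<Rightarrow> real \<Rightarrow> real \<Rightarrow> bool" where
  "mixing_rate T C \<theta> \<longleftrightarrow> (\<forall>\<psi> \<phi> (n::nat). total_var \<psi> < \<infinity> \<and> \<phi> \<in> borel_measurable circle_measure \<and>
     esssup circle_measure (\<lambda>x. ereal \<bar>\<phi> x\<bar>) < \<infinity> \<longrightarrow>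
     \<bar>(\<integral>x. \<psi> x * \<phi> ((T ^^ n) x) \<partial>circle_measure)
       - (\<integral>x. \<psi> x \<partial>circle_measure) * (\<integral>x. \<phi> x \<partial>circle_measure)\<bar>
     \<le> C * bv_norm \<psi> * linf_norm circle_measure \<phi> * exp (- \<theta> * real n))"

lemma exp_mixing_BV_Linf_iff:
  "exp_mixing_BV_Linf T \<longleftrightarrow> (\<exists>C \<theta>. C > 0 \<and> \<theta> > 0 \<and> mixing_rate T C \<theta>)"
  unfolding exp_mixing_BV_Linf_def mixing_rate_def ..

lemma mixing_rate_le:
  assumes mix: "mixing_rate T C \<theta>" and C: "C \<ge> 0"
    and \<psi>: "total_var \<psi> < \<infinity>" "\<And>x. x \<in> {0..<1} \<Longrightarrow> \<bar>\<psi> x\<bar> \<le> B"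
    and \<phi>: "\<phi> \<in> borel_measurable circle_measure" "\<And>x. x \<in> {0..<1} \<Longrightarrow> \<bar>\<phi> x\<bar> \<le> 1"
  shows "\<bar>(\<integral>x. \<psi> x * \<phi> ((T ^^ n) x) \<partial>circle_measure)
       - (\<integral>x. \<psi> x \<partial>circle_measure) * (\<integral>x. \<phi> x \<partial>circle_measure)\<bar>
     \<le> C * bv_norm \<psi> * exp (- \<theta> * real n)"
proof -
  have ess: "esssup circle_measure (\<lambda>x. ereal \<bar>\<phi> x\<bar>) \<le> 1"
    by (rule esssup_I) (use \<phi> in \<open>auto simp: space_circle_measure\<close>)
  then have "esssup circle_measure (\<lambda>x. ereal \<bar>\<phi> x\<bar>) < \<infinity>" by (rule le_less_trans) simp
  then have "\<bar>(\<integral>x. \<psi> x * \<phi> ((T ^^ n) x) \<partial>circle_measure)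
       - (\<integral>x. \<psi> x \<partial>circle_measure) * (\<integral>x. \<phi> x \<partial>circle_measure)\<bar>
     \<le> C * bv_norm \<psi> * linf_norm circle_measure \<phi> * exp (- \<theta> * real n)"
    using mix \<psi>(1) \<phi>(1) unfolding mixing_rate_def by blast
  also have "\<dots> \<le> C * bv_norm \<psi> * 1 * exp (- \<theta> * real n)"
  proof (intro mult_right_mono mult_left_mono)
    show "linf_norm circle_measure \<phi> \<le> 1"
      using ess unfolding linf_norm_def by (cases "esssup circle_measure (\<lambda>x. ereal \<bar>\<phi> x\<bar>)") auto
    show "0 \<le> C * bv_norm \<psi>" using C bv_norm_nonneg[OF \<psi>(2)] by simp
  qed simp
  finally show ?thesis by simp
qed

lemma integral_circle_measure_01:
  fixes F :: "real \<Rightarrow> real"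
  assumes F_meas: "F \<in> borel_measurable circle_measure"
    and F01: "\<And>x. x \<in> {0..<1} \<Longrightarrow> 0 \<le> F x \<and> F x \<le> 1"
  shows "0 \<le> (\<integral>x. F x \<partial>circle_measure) \<and> (\<integral>x. F x \<partial>circle_measure) \<le> 1"
proof
  interpret P: prob_space circle_measure by (rule prob_space_circle_measure)
  show "0 \<le> (\<integral>x. F x \<partial>circle_measure)"
    by (rule integral_nonneg_AE) (use F01 in \<open>auto simp: space_circle_measure\<close>)
  have "integrable circle_measure F"
    by (rule P.integrable_const_bound[where B=1]) (use F01 F_meas in \<open>auto simp: space_circle_measure\<close>)
  then have "(\<integral>x. F x \<partial>circle_measure) \<le> (\<integral>x. 1 \<partial>circle_measure)"
    by (rule integral_mono_AE) (use F01 in \<open>auto simp: space_circle_measure\<close>)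
  then show "(\<integral>x. F x \<partial>circle_measure) \<le> 1" by (simp add: P.prob_space)
qed

text \<open>Mixing at lag \<open>g\<close> makes the first factor of \<open>\<Phi>\<^sub>m\<^sub>+\<^sub>1 x = F x * \<Phi>\<^sub>m (T\<^sup>g x)\<close>
  almost independent of the rest, up to the error \<open>C \<parallel>F\<parallel>\<^sub>B\<^sub>V e\<^sup>-\<^sup>\<theta>\<^sup>g\<close> once per factor.\<close>

lemma integral_prod_funpow_le:
  fixes F :: "real \<Rightarrow> real" and g m :: nat
  assumes T: "T \<in> measurable circle_measure circle_measure"
    and mix: "mixing_rate T C \<theta>" and C: "C \<ge> 0"
    and F_meas: "F \<in> borel_measurable circle_measure" and F_tv: "total_var F < \<infinity>"
    and F01: "\<And>x. x \<in> {0..<1} \<Longrightarrow> 0 \<le> F x \<and> F x \<le> 1"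
  shows "(\<integral>x. (\<Prod>l<m. F ((T ^^ (l * g)) x)) \<partial>circle_measure)
     \<le> (\<integral>x. F x \<partial>circle_measure) ^ m + real m * (C * bv_norm F * exp (- \<theta> * real g))"
proof -
  interpret P: prob_space circle_measure by (rule prob_space_circle_measure)
  define \<epsilon> where "\<epsilon> = C * bv_norm F * exp (- \<theta> * real g)"
  define I where "I = (\<integral>x. F x \<partial>circle_measure)"
  define \<Phi> where "\<Phi> m x = (\<Prod>l<m. F ((T ^^ (l * g)) x))" for m x
  have \<epsilon>: "0 \<le> \<epsilon>" unfolding \<epsilon>_def using C bv_norm_nonneg[of F 1] F01 by simp
  have \<Phi>_meas: "\<Phi> m \<in> borel_measurable circle_measure" for m
    unfolding \<Phi>_def by (intro borel_measurable_prod measurable_compose[OF measurable_compose_n[OF T] F_meas])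
  have \<Phi>01: "0 \<le> \<Phi> m x \<and> \<Phi> m x \<le> 1" if "x \<in> {0..<1}" for m x
    unfolding \<Phi>_def using F01 funpow_in_unit_interval[OF T that] by (auto intro!: prod_nonneg prod_le_1)
  have I01: "0 \<le> I" "I \<le> 1"
    unfolding I_def using integral_circle_measure_01[OF F_meas F01] by auto
  have step: "(\<integral>x. \<Phi> (Suc m) x \<partial>circle_measure) \<le> I * (\<integral>x. \<Phi> m x \<partial>circle_measure) + \<epsilon>" for m
  proof -
    have "\<Phi> (Suc m) x = F x * \<Phi> m ((T ^^ g) x)" for x
    proof -
      have "(T ^^ (Suc l * g)) x = (T ^^ (l * g)) ((T ^^ g) x)" for l
        by (metis add.commute funpow_add mult_Suc o_apply)
      then show ?thesis unfolding \<Phi>_def prod.lessThan_Suc_shift by simp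
    qed
    moreover have "\<bar>(\<integral>x. F x * \<Phi> m ((T ^^ g) x) \<partial>circle_measure) - I * (\<integral>x. \<Phi> m x \<partial>circle_measure)\<bar> \<le> \<epsilon>"
      unfolding I_def \<epsilon>_def
      by (rule mixing_rate_le[OF mix C F_tv _ \<Phi>_meas]) (use F01 \<Phi>01 in auto)
    ultimately show ?thesis by simp
  qed
  have "(\<integral>x. \<Phi> m x \<partial>circle_measure) \<le> I ^ m + real m * \<epsilon>"
  proof (induction m)
    case 0
    then show ?case by (simp add: \<Phi>_def P.prob_space)
  next
    case (Suc m)
    have "(\<integral>x. \<Phi> (Suc m) x \<partial>circle_measure) \<le> I * (I ^ m + real m * \<epsilon>) + \<epsilon>"
      using step[of m] mult_left_mono[OF Suc.IH I01(1)] by linarith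
    also have "\<dots> \<le> I ^ Suc m + real (Suc m) * \<epsilon>"
      using mult_right_mono[OF I01(2), of "real m * \<epsilon>"] \<epsilon> by (simp add: algebra_simps)
    finally show ?case .
  qed
  then show ?thesis unfolding \<Phi>_def I_def \<epsilon>_def .
qed

section \<open>Avoiding separated arcs\<close>

locale separated_points =
  fixes z :: "nat \<Rightarrow> real" and n :: nat and \<rho> :: real
  assumes points_in: "\<And>j. j < n \<Longrightarrow> z j \<in> {0..<1}"
    and radius_pos: "0 < \<rho>" and radius_less: "\<rho> < 1/2"
    and separated: "\<And>j j'. j < n \<Longrightarrow> j' < n \<Longrightarrow> j \<noteq> j' \<Longrightarrow> 2 * \<rho> \<le> circ_dist (z j) (z j')"
begin

lemma ball_unique:
  assumes "j < n" "j' < n" "circ_dist x (z j) < \<rho>" "circ_dist x (z j') < \<rho>"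
  shows "j = j'"
proof (rule ccontr)
  assume "j \<noteq> j'"
  then have "2 * \<rho> \<le> circ_dist (z j) (z j')" using separated assms by blast
  moreover have "circ_dist (z j) (z j') \<le> circ_dist (z j) x + circ_dist x (z j')"
    by (rule circ_dist_triangle)
  ultimately show False using assms circ_dist_commute[of "z j" x] by linarith
qed

lemma uncovered_eq:
  assumes "x \<in> {0..<1}"
  shows "uncovered z n \<rho> x = (if \<exists>j<n. circ_dist x (z j) < \<rho> then 0 else 1)"
proof -
  have "uncovered z n \<rho> x = 1 - (\<Sum>j<n. if circ_dist x (z j) < \<rho> then 1 else 0)"
    unfolding uncovered_def using arc_indicator_eq[OF points_in assms radius_pos radius_less]
    by simp
  also have "\<dots> = 1 - (if \<exists>j<n. circ_dist x (z j) < \<rho> then 1 else 0)"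
    by (subst sum_if_unique) (use ball_unique in auto)
  finally show ?thesis by simp
qed

lemma integral_uncovered: "(\<integral>x. uncovered z n \<rho> x \<partial>circle_measure) = 1 - 2 * real n * \<rho>"
proof -
  interpret P: prob_space circle_measure by (rule prob_space_circle_measure)
  have int: "integrable circle_measure (arc_indicator (z j) \<rho>)" if "j < n" for j
    by (rule P.integrable_const_bound[where B=1])
      (use arc_indicator_eq[OF points_in[OF that] _ radius_pos radius_less]
        in \<open>auto simp: space_circle_measure intro: borel_measurable_circle_measure\<close>)
  have "(\<integral>x. uncovered z n \<rho> x \<partial>circle_measure)
      = (\<integral>x. 1 \<partial>circle_measure) - (\<integral>x. (\<Sum>j<n. arc_indicator (z j) \<rho> x) \<partial>circle_measure)"
    unfolding uncovered_def using int by (intro Bochner_Integration.integral_diff) auto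
  also have "\<dots> = 1 - (\<Sum>j<n. \<integral>x. arc_indicator (z j) \<rho> x \<partial>circle_measure)"
    using int by (simp add: Bochner_Integration.integral_sum P.prob_space)
  also have "\<dots> = 1 - 2 * real n * \<rho>"
    using integral_arc_indicator[OF points_in radius_pos radius_less] by simp
  finally show ?thesis .
qed

end

context separated_points
begin

lemma measure_avoiding_le:
  assumes T: "T \<in> measurable circle_measure circle_measure"
    and mix: "mixing_rate T C \<theta>" and C: "C \<ge> 0" and \<rho>r: "\<rho> \<le> r"
    and samples: "\<And>l. l < m \<Longrightarrow> l * g < n"
  shows "measure circle_measure {x\<in>{0..<1}. \<forall>i<n. \<forall>j<n. r \<le> circ_dist ((T ^^ i) x) (z j)}
     \<le> (1 - 2 * real n * \<rho>) ^ m + real m * (C * (1 + 6 * real n) * exp (- \<theta> * real g))"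
proof -
  interpret P: prob_space circle_measure by (rule prob_space_circle_measure)
  let ?F = "uncovered z n \<rho>"
  define \<Phi> where "\<Phi> x = (\<Prod>l<m. ?F ((T ^^ (l * g)) x))" for x
  have F01: "0 \<le> ?F x \<and> ?F x \<le> 1" if "x \<in> {0..<1}" for x
    using uncovered_eq[OF that] by simp
  have F_meas: "?F \<in> borel_measurable circle_measure"
    by (rule borel_measurable_circle_measure) measurable
  have F_tv: "total_var ?F < \<infinity>"
    using total_var_uncovered by (rule le_less_trans) simp
  have bv: "bv_norm ?F \<le> 1 + 6 * real n"
    by (rule bv_norm_le) (use F01 total_var_uncovered in auto)
  have \<Phi>_meas: "\<Phi> \<in> borel_measurable circle_measure"
    unfolding \<Phi>_def by (intro borel_measurable_prod measurable_compose[OF measurable_compose_n[OF T] F_meas])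
  have \<Phi>01: "0 \<le> \<Phi> x \<and> \<Phi> x \<le> 1" if "x \<in> {0..<1}" for x
    unfolding \<Phi>_def using F01 funpow_in_unit_interval[OF T that] by (auto intro!: prod_nonneg prod_le_1)
  have \<Phi>_int: "integrable circle_measure \<Phi>"
    by (rule P.integrable_const_bound[where B=1]) (use \<Phi>_meas \<Phi>01 in \<open>auto simp: space_circle_measure\<close>)
  have "{x\<in>{0..<1}. \<forall>i<n. \<forall>j<n. r \<le> circ_dist ((T ^^ i) x) (z j)}
      \<subseteq> {x\<in>space circle_measure. 1 \<le> \<Phi> x}"
  proof safe
    fix x assume x: "x \<in> {0..<1}" and far: "\<forall>i<n. \<forall>j<n. r \<le> circ_dist ((T ^^ i) x) (z j)"
    have "?F ((T ^^ (l * g)) x) = 1" if "l < m" for l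
      using uncovered_eq[OF funpow_in_unit_interval[OF T x]] far samples[OF that] \<rho>r by force
    then show "1 \<le> \<Phi> x" by (simp add: \<Phi>_def)
  qed (simp add: space_circle_measure)
  then have "measure circle_measure {x\<in>{0..<1}. \<forall>i<n. \<forall>j<n. r \<le> circ_dist ((T ^^ i) x) (z j)}
      \<le> measure circle_measure {x\<in>space circle_measure. 1 \<le> \<Phi> x}"
    by (intro P.finite_measure_mono) (use \<Phi>_meas in measurable)
  also have "\<dots> \<le> (\<integral>x. \<Phi> x \<partial>circle_measure)"
    using AE_I2[of circle_measure "\<lambda>x. 0 \<le> \<Phi> x"] integral_Markov_inequality_measure[OF \<Phi>_int sets.top, of 1] \<Phi>01
    by (simp add: space_circle_measure)
  also have "\<dots> \<le> (1 - 2 * real n * \<rho>) ^ m + real m * (C * bv_norm ?F * exp (- \<theta> * real g))"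
    unfolding \<Phi>_def integral_uncovered[symmetric]
    by (rule integral_prod_funpow_le[OF T mix C F_meas F_tv F01])
  also have "\<dots> \<le> (1 - 2 * real n * \<rho>) ^ m + real m * (C * (1 + 6 * real n) * exp (- \<theta> * real g))"
    using bv C by (intro add_left_mono mult_left_mono mult_right_mono) auto
  finally show ?thesis .
qed

end

lemma separated_points_orbit:
  assumes y: "y \<in> {0..<1}" and \<rho>: "0 < \<rho>" "\<rho> < 1/2"
    and gap: "\<And>k. 0 < k \<Longrightarrow> k < n \<Longrightarrow> 2 * \<rho> \<le> dist_int (real k * \<alpha>)"
  shows "separated_points (\<lambda>j. (rot \<alpha> ^^ j) y) n \<rho>"
proof
  show "(rot \<alpha> ^^ j) y \<in> {0..<1}" for j
    by (rule funpow_in_unit_interval[OF rot_measurable y])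
  have sep: "2 * \<rho> \<le> circ_dist ((rot \<alpha> ^^ j) y) ((rot \<alpha> ^^ j') y)" if "j' < j" "j < n" for j j'
    using gap[of "j - j'"] that by (simp add: circ_dist_funpow_rot)
  fix j j' assume "j < n" "j' < n" "j \<noteq> j'"
  then show "2 * \<rho> \<le> circ_dist ((rot \<alpha> ^^ j) y) ((rot \<alpha> ^^ j') y)"
    using sep[of j' j] sep[of j j'] circ_dist_commute by (cases "j' < j") auto
qed (use \<rho> in auto)

lemma E_set_measurable:
  assumes T: "T \<in> measurable circle_measure circle_measure"
  shows "E_set T (rot \<alpha>) n r \<in> sets (circle_measure \<Otimes>\<^sub>M circle_measure)"
proof -
  let ?M = "circle_measure \<Otimes>\<^sub>M circle_measure"
  define d where "d i j p = circ_dist ((T ^^ i) (fst p)) ((rot \<alpha> ^^ j) (snd p))" for i j p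
  have "d i j \<in> borel_measurable ?M" for i j
  proof -
    have "(\<lambda>p. ((T ^^ i) (fst p), (rot \<alpha> ^^ j) (snd p))) \<in> measurable ?M (borel \<Otimes>\<^sub>M borel)"
      by (intro measurable_Pair measurable_circle_measure_imp_borel
          measurable_compose[OF measurable_fst measurable_compose_n[OF T]]
          measurable_compose[OF measurable_snd measurable_compose_n[OF rot_measurable]])
    from measurable_compose[OF this borel_measurable_circ_dist] show ?thesis
      unfolding d_def[abs_def] by simp
  qed
  moreover have "E_set T (rot \<alpha>) n r = (\<Union>i<n. \<Union>j<n. {p \<in> space ?M. d i j p < r})"
    unfolding E_set_def d_def space_pair_circle_measure by fastforce
  ultimately show ?thesis by auto
qed

lemma emeasure_not_E_set_le:
  assumes T: "T \<in> measurable circle_measure circle_measure"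
    and mix: "mixing_rate T C \<theta>" and C: "C \<ge> 0"
    and \<rho>: "0 < \<rho>" "\<rho> < 1/2" "\<rho> \<le> r"
    and samples: "\<And>l. l < m \<Longrightarrow> l * g < n"
    and gap: "\<And>k. 0 < k \<Longrightarrow> k < n \<Longrightarrow> 2 * \<rho> \<le> dist_int (real k * \<alpha>)"
  shows "emeasure (circle_measure \<Otimes>\<^sub>M circle_measure)
      (space (circle_measure \<Otimes>\<^sub>M circle_measure) - E_set T (rot \<alpha>) n r)
    \<le> ennreal ((1 - 2 * real n * \<rho>) ^ m + real m * (C * (1 + 6 * real n) * exp (- \<theta> * real g)))"
    (is "emeasure ?M ?D \<le> ennreal ?b")
proof -
  interpret P: prob_space circle_measure by (rule prob_space_circle_measure)
  interpret PP: pair_prob_space circle_measure circle_measure ..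
  have "?D \<in> sets ?M" by (intro sets.Diff sets.top E_set_measurable T)
  then have "emeasure ?M ?D = (\<integral>\<^sup>+y. emeasure circle_measure ((\<lambda>x. (x, y)) -` ?D) \<partial>circle_measure)"
    by (rule PP.emeasure_pair_measure_alt2)
  also have "\<dots> \<le> (\<integral>\<^sup>+y. ennreal ?b \<partial>circle_measure)"
  proof (rule nn_integral_mono)
    fix y assume "y \<in> space circle_measure"
    then have y: "y \<in> {0..<1}" by (simp add: space_circle_measure)
    interpret separated_points "\<lambda>j. (rot \<alpha> ^^ j) y" n \<rho>
      by (rule separated_points_orbit[OF y \<rho>(1,2) gap])
    have "(\<lambda>x. (x, y)) -` ?D = {x\<in>{0..<1}. \<forall>i<n. \<forall>j<n. r \<le> circ_dist ((T ^^ i) x) ((rot \<alpha> ^^ j) y)}"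
      using y unfolding E_set_def space_pair_circle_measure by (fastforce simp: not_less)
    then have "measure circle_measure ((\<lambda>x. (x, y)) -` ?D) \<le> ?b"
      using measure_avoiding_le[OF T mix C \<rho>(3) samples] by simp
    then show "emeasure circle_measure ((\<lambda>x. (x, y)) -` ?D) \<le> ennreal ?b"
      by (simp add: P.emeasure_eq_measure ennreal_leI)
  qed
  also have "\<dots> = ennreal ?b" by (simp add: P.emeasure_space_1)
  finally show ?thesis .
qed

lemma one_le_ln:
  fixes x :: real
  assumes "3 \<le> x"
  shows "1 \<le> ln x"
proof -
  have "exp 1 \<le> x" using exp_le assms by linarith
  then show ?thesis using assms by (subst ln_ge_iff) auto
qed

text \<open>Sample the orbit at spacing \<open>g \<approx> 3 ln n / \<theta>\<close>: the mixing error \<open>e\<^sup>-\<^sup>\<theta>\<^sup>g \<le> n\<^sup>-\<^sup>3\<close> becomes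
  negligible, while \<open>m \<approx> n / g\<close> samples still fit into \<open>[0, n)\<close>.\<close>

lemma sampling_parameters:
  fixes n :: nat and \<theta> :: real
  assumes n: "3 \<le> n" and \<theta>: "0 < \<theta>"
  obtains g m :: nat where "\<And>l. l < m \<Longrightarrow> l * g < n" "real n \<le> real m * real g" "m \<le> n"
    "real g \<le> (3 / \<theta> + 2) * ln n" "exp (- \<theta> * real g) \<le> 1 / real n ^ 3"
proof -
  have ln_n: "1 \<le> ln (real n)" using n by (intro one_le_ln) simp
  define g where "g = nat \<lceil>3 * ln (real n) / \<theta>\<rceil> + 1"
  define m where "m = (n - 1) div g + 1"
  have g_pos: "0 < g" unfolding g_def by simp
  have ceil: "3 * ln (real n) / \<theta> \<le> real (nat \<lceil>3 * ln (real n) / \<theta>\<rceil>)"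
    "real (nat \<lceil>3 * ln (real n) / \<theta>\<rceil>) \<le> 3 * ln (real n) / \<theta> + 1"
    using ln_n \<theta> le_of_int_ceiling[of "3 * ln (real n) / \<theta>"]
      of_int_ceiling_le_add_one[of "3 * ln (real n) / \<theta>"] by simp_all
  show thesis
  proof (rule that)
    show "l * g < n" if "l < m" for l
    proof -
      have "l * g \<le> (n - 1) div g * g" using that unfolding m_def by simp
      also have "\<dots> \<le> n - 1" by (rule div_times_less_eq_dividend)
      finally show ?thesis using n by linarith
    qed
    have "m * g = (n - 1) div g * g + g" unfolding m_def by (simp add: add_mult_distrib)
    then have "n - 1 < m * g"
      using mod_less_divisor[OF g_pos, of "n - 1"] div_mult_mod_eq[of "n - 1" g] by linarith
    then show "real n \<le> real m * real g" using n by (simp flip: of_nat_mult)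
    show "m \<le> n" using div_le_dividend[of "n - 1" g] n unfolding m_def by linarith
    have "real g \<le> 3 * ln (real n) / \<theta> + 2" using ceil unfolding g_def by simp
    also have "\<dots> \<le> (3 / \<theta> + 2) * ln (real n)" using ln_n by (simp add: algebra_simps)
    finally show "real g \<le> (3 / \<theta> + 2) * ln (real n)" .
    have "3 * ln (real n) \<le> \<theta> * real g" using ceil \<theta> unfolding g_def by (simp add: field_simps)
    then have "exp (- \<theta> * real g) \<le> exp (- (3 * ln (real n)))" by simp
    also have "\<dots> = 1 / real n ^ 3"
      using n by (simp add: exp_minus exp_of_nat_mult[of 3, simplified] inverse_eq_divide)
    finally show "exp (- \<theta> * real g) \<le> 1 / real n ^ 3" .
  qed
qed

lemma one_minus_power_le_exp:
  fixes a :: real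
  assumes "a \<le> 1"
  shows "(1 - a) ^ m \<le> exp (- (a * real m))"
proof -
  have "(1 - a) ^ m \<le> exp (- a) ^ m"
    using assms exp_ge_add_one_self[of "- a"] by (intro power_mono) auto
  then show ?thesis by (simp add: mult.commute flip: exp_of_nat_mult)
qed

lemma emeasure_not_E_set_small:
  assumes T: "T \<in> measurable circle_measure circle_measure"
    and mix: "mixing_rate T C \<theta>" and C: "0 \<le> C" and \<theta>: "0 < \<theta>"
    and n: "3 \<le> n" and G: "0 < G" and \<rho>: "\<rho> = G * ln (real n) / (real n)\<^sup>2" "\<rho> \<le> r"
    and sparse: "2 * G * ln (real n) / real n \<le> 1"
    and gap: "\<And>k. 0 < k \<Longrightarrow> k < n \<Longrightarrow> 2 * \<rho> \<le> dist_int (real k * \<alpha>)"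
  shows "emeasure (circle_measure \<Otimes>\<^sub>M circle_measure)
      (space (circle_measure \<Otimes>\<^sub>M circle_measure) - E_set T (rot \<alpha>) n r)
    \<le> ennreal (exp (- (2 * G / (3 / \<theta> + 2))) + 7 * C / real n)"
proof -
  obtain g m where samples: "\<And>l. l < m \<Longrightarrow> l * g < n" and mg: "real n \<le> real m * real g"
    and mn: "m \<le> n" and g: "real g \<le> (3 / \<theta> + 2) * ln n" and decay: "exp (- \<theta> * real g) \<le> 1 / real n ^ 3"
    using sampling_parameters[OF n \<theta>] by blast
  have ln_n: "1 \<le> ln (real n)" using n by (intro one_le_ln) simp
  have \<rho>_pos: "0 < \<rho>" using G ln_n n unfolding \<rho> by simp
  have "\<rho> < 1/2" using gap[of 1] dist_int_le_half[of \<alpha>] n by simp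
  define a where "a = 2 * real n * \<rho>"
  have a: "a = 2 * G * ln (real n) / real n" "0 \<le> a"
    using \<rho>_pos n unfolding a_def by (simp add: \<rho> power2_eq_square, simp)
  have g_pos: "0 < real g" using mg n by (cases g) auto
  define K where "K = 3 / \<theta> + 2"
  have K: "0 < K" unfolding K_def using \<theta> by (simp add: add_pos_nonneg)
  have "2 * G / K = a * real n / (K * ln (real n))"
    using a(1) ln_n n K by (simp add: field_simps)
  also have "\<dots> \<le> a * real n / real g"
    using a(2) g g_pos unfolding K_def by (intro divide_left_mono) auto
  also have "\<dots> \<le> a * real m"
    using a(2) mg g_pos by (simp add: field_simps mult_left_mono)
  finally have am: "2 * G / (3 / \<theta> + 2) \<le> a * real m" unfolding K_def .
  have "(1 - a) ^ m \<le> exp (- (a * real m))"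
    using sparse a(1) by (intro one_minus_power_le_exp) simp
  also have "\<dots> \<le> exp (- (2 * G / (3 / \<theta> + 2)))" using am by simp
  finally have main: "(1 - a) ^ m \<le> exp (- (2 * G / (3 / \<theta> + 2)))" .
  have "real m * (C * (1 + 6 * real n) * exp (- \<theta> * real g)) \<le> real n * (C * (7 * real n) * (1 / real n ^ 3))"
    using n C mn decay by (intro mult_mono) auto
  also have "\<dots> = 7 * C / real n" using n by (simp add: power3_eq_cube field_simps)
  finally have err: "real m * (C * (1 + 6 * real n) * exp (- \<theta> * real g)) \<le> 7 * C / real n" .
  have "emeasure (circle_measure \<Otimes>\<^sub>M circle_measure)
      (space (circle_measure \<Otimes>\<^sub>M circle_measure) - E_set T (rot \<alpha>) n r)
    \<le> ennreal ((1 - a) ^ m + real m * (C * (1 + 6 * real n) * exp (- \<theta> * real g)))"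
    unfolding a_def by (rule emeasure_not_E_set_le[OF T mix C \<rho>_pos \<open>\<rho> < 1/2\<close> \<rho>(2) samples gap])
  also have "\<dots> \<le> ennreal (exp (- (2 * G / (3 / \<theta> + 2))) + 7 * C / real n)"
    using main err by (intro ennreal_leI) simp
  finally show ?thesis .
qed

section \<open>Separation of the rotation orbit\<close>

lemma dist_int_mult_pos:
  assumes c: "0 < c" and \<phi>: "\<And>q. 0 < \<phi> q"
    and dioph: "\<exists>Q. \<forall>q\<ge>Q. \<forall>p::int. \<bar>real q * \<alpha> - of_int p\<bar> \<ge> c * (ln (real q) * \<phi> q) / (real q)\<^sup>2"
    and k: "0 < k"
  shows "0 < dist_int (real k * \<alpha>)"
proof (rule ccontr)
  assume "\<not> 0 < dist_int (real k * \<alpha>)"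
  then have "real k * \<alpha> = of_int (round (real k * \<alpha>))"
    unfolding dist_int_def by simp
  then obtain p where p: "real k * \<alpha> = of_int p" by blast
  obtain Q where Q: "\<forall>q\<ge>Q. \<forall>p::int. \<bar>real q * \<alpha> - of_int p\<bar> \<ge> c * (ln (real q) * \<phi> q) / (real q)\<^sup>2"
    using dioph by blast
  define q where "q = k * (Q + 2)"
  have "Q + 2 \<le> q" unfolding q_def using k by (cases k) auto
  then have q: "Q \<le> q" "2 \<le> q" by simp_all
  have "real q * \<alpha> = of_int (int (Q + 2) * p)"
    unfolding q_def by (simp add: p[symmetric] algebra_simps)
  then have "c * (ln (real q) * \<phi> q) / (real q)\<^sup>2 \<le> 0"
    using Q q(1) by (metis abs_zero cancel_comm_monoid_add_class.diff_cancel)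
  moreover have "0 < c * (ln (real q) * \<phi> q) / (real q)\<^sup>2"
    using q(2) c \<phi>[of q] by simp
  ultimately show False by linarith
qed

lemma ln_div_square_antimono:
  fixes k x :: real
  assumes "3 \<le> k" "k \<le> x"
  shows "ln x / x\<^sup>2 \<le> ln k / k\<^sup>2"
proof -
  define t where "t = x / k"
  have k: "0 < k" "1 \<le> ln k" using assms by (simp_all add: one_le_ln)
  have t: "1 \<le> t" "x = k * t" unfolding t_def using assms k by simp_all
  have "ln t \<le> t - 1" using t by (intro ln_le_minus_one) simp
  also have "\<dots> \<le> t\<^sup>2 - 1" using mult_left_mono[of 1 t t] t by (simp add: power2_eq_square)
  also have "\<dots> \<le> (t\<^sup>2 - 1) * ln k"
    using t k mult_left_mono[of 1 "ln k" "t\<^sup>2 - 1"] by (simp add: one_le_power)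
  finally have "ln x \<le> t\<^sup>2 * ln k" using k t by (simp add: ln_mult algebra_simps)
  then have "ln x / x\<^sup>2 \<le> t\<^sup>2 * ln k / x\<^sup>2" using k t by (intro divide_right_mono) auto
  also have "\<dots> = ln k / k\<^sup>2" using k t by (simp add: power2_eq_square field_simps)
  finally show ?thesis .
qed

text \<open>Small \<open>k\<close> are handled by irrationality alone; for large \<open>k\<close> the Diophantine bound
  \<open>c ln k \<phi>(k) / k\<^sup>2\<close> dominates \<open>2 G ln n / n\<^sup>2\<close> once \<open>c \<phi>(k) \<ge> 2 G\<close>, because \<open>ln t / t\<^sup>2\<close> decreases.\<close>

lemma eventually_rotation_gap:
  assumes c: "0 < c" and \<phi>_pos: "\<And>q. 0 < \<phi> q" and \<phi>_lim: "filterlim \<phi> at_top sequentially"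
    and dioph: "\<exists>Q. \<forall>q\<ge>Q. \<forall>p::int. \<bar>real q * \<alpha> - of_int p\<bar> \<ge> c * (ln (real q) * \<phi> q) / (real q)\<^sup>2"
    and G: "0 \<le> G"
  shows "\<forall>\<^sub>F n in sequentially. \<forall>k. 0 < k \<longrightarrow> k < n \<longrightarrow>
           2 * (G * ln (real n) / (real n)\<^sup>2) \<le> dist_int (real k * \<alpha>)"
proof -
  obtain Q0 where Q0: "\<forall>q\<ge>Q0. \<forall>p::int. \<bar>real q * \<alpha> - of_int p\<bar> \<ge> c * (ln (real q) * \<phi> q) / (real q)\<^sup>2"
    using dioph by blast
  have "\<forall>\<^sub>F k in sequentially. 2 * G / c \<le> \<phi> k"
    using \<phi>_lim by (simp add: filterlim_at_top)
  then obtain Q1 where Q1: "\<And>k. Q1 \<le> k \<Longrightarrow> 2 * G / c \<le> \<phi> k" by (auto simp: eventually_sequentially)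
  define Q where "Q = max 3 (max Q0 Q1)"
  define \<delta> where "\<delta> = Min (insert 1 ((\<lambda>k. dist_int (real k * \<alpha>)) ` {0<..<Q}))"
  have \<delta>: "0 < \<delta>" "\<And>k. 0 < k \<Longrightarrow> k < Q \<Longrightarrow> \<delta> \<le> dist_int (real k * \<alpha>)"
    unfolding \<delta>_def using dist_int_mult_pos[OF c \<phi>_pos dioph] by auto
  have large: "2 * (G * ln (real n) / (real n)\<^sup>2) \<le> dist_int (real k * \<alpha>)"
    if "Q \<le> k" "k < n" for k n :: nat
  proof -
    have k: "3 \<le> real k" using that unfolding Q_def by simp
    have "2 * (G * ln (real n) / (real n)\<^sup>2) = 2 * G * (ln (real n) / (real n)\<^sup>2)" by simp
    also have "\<dots> \<le> 2 * G * (ln (real k) / (real k)\<^sup>2)"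
      using G k that by (intro mult_left_mono ln_div_square_antimono) auto
    also have "\<dots> \<le> c * \<phi> k * (ln (real k) / (real k)\<^sup>2)"
      using Q1[of k] that c k unfolding Q_def by (intro mult_right_mono) (auto simp: field_simps)
    also have "\<dots> = c * (ln (real k) * \<phi> k) / (real k)\<^sup>2" by (simp add: mult_ac)
    also have "\<dots> \<le> \<bar>real k * \<alpha> - of_int (round (real k * \<alpha>))\<bar>"
      using Q0 that unfolding Q_def by simp
    finally show ?thesis unfolding dist_int_def .
  qed
  have "(\<lambda>n::nat. G * (ln (real n) / (real n)\<^sup>2)) \<longlonglongrightarrow> 0"
    by (rule tendsto_mult_right_zero) real_asymp
  then have "\<forall>\<^sub>F n in sequentially. G * (ln (real n) / (real n)\<^sup>2) < \<delta> / 2"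
    by (rule order_tendstoD(2)) (use \<delta>(1) in auto)
  then show ?thesis
  proof (rule eventually_mono, intro allI impI)
    fix n k :: nat assume small: "G * (ln (real n) / (real n)\<^sup>2) < \<delta> / 2" and k: "0 < k" "k < n"
    show "2 * (G * ln (real n) / (real n)\<^sup>2) \<le> dist_int (real k * \<alpha>)"
    proof (cases "k < Q")
      case True
      then show ?thesis using small \<delta>(2)[OF k(1) True] by (simp add: algebra_simps)
    qed (use large k in simp)
  qed
qed

section \<open>Full measure of the limsup set\<close>

lemma eventually_emeasure_not_E_set_le:
  assumes T: "T \<in> measurable circle_measure circle_measure"
    and mix: "mixing_rate T C \<theta>" and C: "0 < C" and \<theta>: "0 < \<theta>"
    and c: "0 < c" and \<phi>_pos: "\<And>q. 0 < \<phi> q" and \<phi>_lim: "filterlim \<phi> at_top sequentially"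
    and dioph: "\<exists>Q. \<forall>q\<ge>Q. \<forall>p::int. \<bar>real q * \<alpha> - of_int p\<bar> \<ge> c * (ln (real q) * \<phi> q) / (real q)\<^sup>2"
    and r_lower: "\<And>n. r n \<ge> ln (real n) * h n / (real n)\<^sup>2"
    and h_lim: "filterlim h at_top sequentially"
    and \<epsilon>: "0 < \<epsilon>"
  shows "\<forall>\<^sub>F n in sequentially. emeasure (circle_measure \<Otimes>\<^sub>M circle_measure)
      (space (circle_measure \<Otimes>\<^sub>M circle_measure) - E_set T (rot \<alpha>) n (r n)) \<le> ennreal \<epsilon>"
proof -
  define K where "K = 3 / \<theta> + 2"
  have K: "0 < K" unfolding K_def using \<theta> by (simp add: add_pos_nonneg)
  define G where "G = K * \<bar>ln (2 / \<epsilon>)\<bar> + 1"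
  have G: "0 < G" unfolding G_def using K by (simp add: add_nonneg_pos)
  have "2 * G / K = 2 * \<bar>ln (2 / \<epsilon>)\<bar> + 2 / K" unfolding G_def using K by (simp add: field_simps)
  then have "ln (2 / \<epsilon>) \<le> 2 * G / K"
    using K abs_ge_self[of "ln (2 / \<epsilon>)"] abs_ge_zero[of "ln (2 / \<epsilon>)"] divide_pos_pos[of 2 K] by linarith
  then have "exp (- (2 * G / K)) \<le> exp (- ln (2 / \<epsilon>))" by simp
  then have exp_G: "exp (- (2 * G / K)) \<le> \<epsilon> / 2" using \<epsilon> by (simp add: exp_minus)
  have "(\<lambda>n::nat. 2 * G * (ln (real n) / real n)) \<longlonglongrightarrow> 0"
    by (rule tendsto_mult_right_zero) real_asymp
  then have sparse: "\<forall>\<^sub>F n in sequentially. 2 * G * (ln (real n) / real n) < 1"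
    by (rule order_tendstoD(2)) simp
  have "\<forall>\<^sub>F n in sequentially. 14 * C / \<epsilon> \<le> real n"
    using filterlim_real_sequentially by (simp add: filterlim_at_top)
  moreover have "\<forall>\<^sub>F n in sequentially. G \<le> h n"
    using h_lim by (simp add: filterlim_at_top)
  moreover note eventually_rotation_gap[OF c \<phi>_pos \<phi>_lim dioph less_imp_le[OF G]] sparse
  moreover have "\<forall>\<^sub>F n in sequentially. 3 \<le> n" by (rule eventually_ge_at_top)
  ultimately show ?thesis
  proof eventually_elim
    case (elim n)
    have ln_n: "1 \<le> ln (real n)" using elim by (intro one_le_ln) simp
    have "G * ln (real n) / (real n)\<^sup>2 \<le> ln (real n) * h n / (real n)\<^sup>2"
      using elim ln_n by (intro divide_right_mono) (auto simp: mult.commute)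
    then have \<rho>: "G * ln (real n) / (real n)\<^sup>2 \<le> r n" using r_lower[of n] by linarith
    have "emeasure (circle_measure \<Otimes>\<^sub>M circle_measure)
        (space (circle_measure \<Otimes>\<^sub>M circle_measure) - E_set T (rot \<alpha>) n (r n))
      \<le> ennreal (exp (- (2 * G / K)) + 7 * C / real n)"
      unfolding K_def using elim G
      by (intro emeasure_not_E_set_small[OF T mix less_imp_le[OF C] \<theta> _ G refl \<rho>]) auto
    also have "\<dots> \<le> ennreal \<epsilon>"
    proof (intro ennreal_leI)
      have "7 * C / real n \<le> \<epsilon> / 2" using elim \<epsilon> by (simp add: field_simps)
      then show "exp (- (2 * G / K)) + 7 * C / real n \<le> \<epsilon>" using exp_G by linarith
    qed
    finally show ?case .
  qed
qed

lemma (in prob_space) emeasure_limsup_eq_1: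
  fixes E :: "nat \<Rightarrow> 'a set"
  assumes E: "\<And>n. E n \<in> events"
    and small: "\<And>\<epsilon>. 0 < \<epsilon> \<Longrightarrow> \<exists>\<^sub>F n in sequentially. emeasure M (space M - E n) \<le> ennreal \<epsilon>"
  shows "emeasure M (\<Inter>N. \<Union>n\<in>{N..}. E n) = 1"
proof (rule emeasure_eq_1_AE)
  have tails: "(\<Union>n\<in>{N..}. E n) \<in> events" for N using E by auto
  then show "(\<Inter>N. \<Union>n\<in>{N..}. E n) \<in> events" by auto
  have "space M - (\<Union>n\<in>{N..}. E n) \<in> null_sets M" for N
  proof -
    have "emeasure M (space M - (\<Union>n\<in>{N..}. E n)) \<le> 0 + ennreal \<epsilon>" if \<epsilon>: "0 < \<epsilon>" for \<epsilon>
    proof -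
      obtain n where n: "N \<le> n" "emeasure M (space M - E n) \<le> ennreal \<epsilon>"
        using small[OF \<epsilon>] unfolding frequently_sequentially by blast
      have "emeasure M (space M - (\<Union>n\<in>{N..}. E n)) \<le> emeasure M (space M - E n)"
        using n(1) by (intro emeasure_mono sets.compl_sets E) blast
      then show ?thesis using n(2) by simp
    qed
    then have "emeasure M (space M - (\<Union>n\<in>{N..}. E n)) \<le> 0"
      by (rule ennreal_le_epsilon)
    then show ?thesis using sets.compl_sets[OF tails[of N]] by (simp add: null_sets_def)
  qed
  then have "AE x in M. x \<in> (\<Union>n\<in>{N..}. E n)" for N
    by (rule AE_I') auto
  then show "AE x in M. x \<in> (\<Inter>N. \<Union>n\<in>{N..}. E n)" by (simp add: AE_all_countable)
qed

theorem mainTheorem11: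
  fixes T1 :: "real \<Rightarrow> real" and \<alpha> c :: real
    and \<phi> h r :: "nat \<Rightarrow> real"
  assumes T1_mp: "measure_preserving_map circle_measure T1"
    and T1_mix: "exp_mixing_BV_Linf T1"
    and c_pos: "c > 0"
    and \<phi>_pos: "\<And>q. \<phi> q > 0"
    and \<phi>_lim: "filterlim \<phi> at_top sequentially"
    and dioph: "\<exists>Q. \<forall>q\<ge>Q. \<forall>p::int.
                  \<bar>real q * \<alpha> - of_int p\<bar> \<ge> c * (ln (real q) * \<phi> q) / (real q)\<^sup>2"
    and r_pos: "\<And>n. r n > 0"
    and r_lower: "\<And>n. r n \<ge> ln (real n) * h n / (real n)\<^sup>2"
    and h_lim: "filterlim h at_top sequentially"
    and h\<phi>: "(\<lambda>n. h n / \<phi> n) \<longlonglongrightarrow> 0"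
  shows "emeasure (circle_measure \<Otimes>\<^sub>M circle_measure)
           (\<Inter>N. \<Union>n\<in>{N..}. E_set T1 (rot \<alpha>) n (r n)) = 1"
proof -
  interpret prob_space "circle_measure \<Otimes>\<^sub>M circle_measure"
    by (rule prob_space_pair[OF prob_space_circle_measure prob_space_circle_measure])
  have T: "T1 \<in> measurable circle_measure circle_measure"
    using T1_mp unfolding measure_preserving_map_def by blast
  obtain C \<theta> where C: "0 < C" and \<theta>: "0 < \<theta>" and mix: "mixing_rate T1 C \<theta>"
    using T1_mix unfolding exp_mixing_BV_Linf_iff by blast
  show ?thesis
  proof (rule emeasure_limsup_eq_1)
    show "E_set T1 (rot \<alpha>) n (r n) \<in> events" for n by (rule E_set_measurable[OF T])
    show "\<exists>\<^sub>F n in sequentially. emeasure (circle_measure \<Otimes>\<^sub>M circle_measure)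
        (space (circle_measure \<Otimes>\<^sub>M circle_measure) - E_set T1 (rot \<alpha>) n (r n)) \<le> ennreal \<epsilon>"
      if "0 < \<epsilon>" for \<epsilon>
      by (rule eventually_frequently[OF _ eventually_emeasure_not_E_set_le[OF T mix C \<theta> c_pos
          \<phi>_pos \<phi>_lim dioph r_lower h_lim that]]) simp
  qed
qed

end
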